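(* Let $N$ be a finite set of bidders with nonnegative bids, and for $T\subseteq N$ let $R(T)$ be the second-highest bid in $T$ ($0$ if $|T|\le 1$). Let $\mathbf{A}$ be the $n\times n$ matrix ($n=|N|$) with first column $0$, second column $(\tfrac12,\tfrac12,0,\dots,0)^T$, and, for $3\le j\le n$, $j$-th column with entries $-\frac{1}{j(j-1)}$ in rows $1,\dots,j-1$, $\frac1j$ in row $j$, and $0$ below. Let $\mathbf{b}$ be the vector of bids of $N$ sorted in decreasing order, and let the attribution of the bidder in sorted position $k$ be $(\mathbf{A}\mathbf{b})_k$. Then for each bidder $i\in N$ (with ties among equal bids broken arbitrarily in the sorting), its attribution equals its Shapley value in the cooperative game $(N,R)$: $$\sum_{T\subseteq N\setminus\{i\}} \frac{|T|!\,(|N|-|T|-1)!}{|N|!}\bigl(R(T\cup\{i\})-R(T)\bigr).$$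
   Context: The attribution $\mathbf{A}\mathbf{b}$ is the linear revenue attribution used by the paper's "Shapley's linear heuristic" for second-price auctions; $R$ is viewed as a characteristic function on subsets of bidders. *)

theory Defs
  imports Complex_Main "HOL-Library.Multiset"
begin

text \<open>Second-highest bid in T (0 if T has at most one bidder): the second entry of the
  bids of T sorted in decreasing order (as a multiset, so ties count twice).\<close>
definition second_price :: "('a \<Rightarrow> real) \<Rightarrow> 'a set \<Rightarrow> real" where
  "second_price b T =
     (if card T \<le> 1 then 0
      else rev (sorted_list_of_multiset (image_mset b (mset_set T))) ! 1)"

definition attrA :: "nat \<Rightarrow> nat \<Rightarrow> real" where
  "attrA i j =
     (if j = 1 then 0
      else if j = 2 then (if i \<le> 2 then 1/2 else 0)
      else if i < j then - 1 / (real j * (real j - 1))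
      else if i = j then 1 / real j
      else 0)"

definition shapley :: "'a set \<Rightarrow> ('a set \<Rightarrow> real) \<Rightarrow> 'a \<Rightarrow> real" where
  "shapley N v i =
     (\<Sum>T\<in>Pow (N - {i}).
        fact (card T) * fact (card N - card T - 1) / fact (card N) * (v (insert i T) - v T))"

end

theory Submission
  imports Defs
begin

text \<open>Let \<open>\<sigma> 1, \<dots>, \<sigma> n\<close> list the bidders by decreasing bid and write \<open>\<beta>\<^sub>j\<close> for the
  \<open>j\<close>-th highest bid, \<open>\<beta>\<^sub>n\<^sub>+\<^sub>1 = 0\<close>. The second price of a coalition is
  \<open>\<Sum>\<^sub>j (\<beta>\<^sub>j - \<beta>\<^sub>j\<^sub>+\<^sub>1) [T contains two of the top j bidders]\<close>, so by linearity of the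
  Shapley value it suffices to know the Shapley value of the game "contains two members of
  \<open>S\<close>": it is \<open>1 / |S|\<close> for members of \<open>S\<close> (a counting argument with binomial sums) and
  \<open>0\<close> for the others. For bidder \<open>k\<close> and \<open>S\<close> the top \<open>j\<close> bidders this is exactly the
  \<open>j\<close>-th partial sum of row \<open>k\<close> of \<open>A\<close>, and summation by parts yields \<open>(A \<beta>)\<^sub>k\<close>.\<close>

lemma choose_add_sym: "(a + b) choose a = (a + b) choose (b::nat)"
  using binomial_symmetric[of a "a + b"] by simp

lemma sum_choose_lower_weighted:
  "(\<Sum>v\<le>m. (Suc m - v) * ((v + d) choose d)) = (m + d + 2) choose (d + 2)"
proof (induction m)
  case 0
  then show ?case by simp
next
  case (Suc m)
  have "(\<Sum>v\<le>Suc m. (Suc (Suc m) - v) * ((v + d) choose d))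
      = (\<Sum>v\<le>Suc m. (Suc m - v) * ((v + d) choose d)) + (\<Sum>v\<le>Suc m. (v + d) choose d)"
    by (simp add: sum.distrib[symmetric] Suc_diff_le algebra_simps)
  also have "(\<Sum>v\<le>Suc m. (v + d) choose d) = (\<Sum>v\<le>Suc m. (d + v) choose v)"
    by (metis add.commute choose_add_sym)
  also have "(\<Sum>v\<le>Suc m. (Suc m - v) * ((v + d) choose d)) = (m + d + 2) choose (d + 2)"
    using Suc.IH by simp
  also have "(\<Sum>v\<le>Suc m. (d + v) choose v) = (Suc m + d + 1) choose Suc m"
    by (simp only: sum_choose_lower) (simp add: ac_simps)
  also have "\<dots> = (m + d + 2) choose (d + 1)"
    using choose_add_sym[of "Suc m" "d + 1"] by (simp add: algebra_simps)
  finally show ?case by simp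
qed

lemma sum_weighted_choose_reflected:
  "(\<Sum>u\<le>m. (Suc u) * ((m - u + d) choose d)) = (m + d + 2) choose (d + 2)"
proof -
  have "(\<Sum>u\<le>m. (Suc u) * ((m - u + d) choose d)) = (\<Sum>v\<le>m. (Suc m - v) * ((v + d) choose d))"
    by (rule sum.reindex_bij_witness[where i="\<lambda>u. m - u" and j="\<lambda>u. m - u"]) auto
  then show ?thesis
    using sum_choose_lower_weighted by simp
qed

lemma choose_fact_summand:
  assumes "u \<le> m"
  shows "(m choose u) * fact (Suc u) * fact (m + d - u)
    = fact m * fact d * (Suc u * ((m - u + d) choose d))"
proof -
  obtain k where m: "m = u + k"
    using assms le_Suc_ex by blast
  have "fact k * ((m choose u) * fact (Suc u) * fact (m + d - u))
      = Suc u * (fact u * fact k * (m choose u)) * fact (k + d)"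
    by (simp add: m fact_Suc algebra_simps)
  also have "\<dots> = Suc u * fact m * (fact d * fact k * ((k + d) choose d))"
    using binomial_fact_lemma[of u m] binomial_fact_lemma[of d "k + d"] m by simp
  also have "\<dots> = fact k * (fact m * fact d * (Suc u * ((m - u + d) choose d)))"
    by (simp add: m algebra_simps)
  finally show ?thesis
    by simp
qed

lemma sum_choose_fact_eq:
  "(\<Sum>u\<le>m. (m choose u) * fact (Suc u) * fact (m + d - u)) * ((d + 1) * (d + 2))
     = fact (m + d + 2)"
proof -
  have sum: "(\<Sum>u\<le>m. (m choose u) * fact (Suc u) * fact (m + d - u))
      = fact m * fact d * ((m + d + 2) choose (d + 2))"
    unfolding sum_weighted_choose_reflected[symmetric] sum_distrib_left
    by (intro sum.cong refl choose_fact_summand) simp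
  have "fact d * ((d + 1) * (d + 2)) = (fact (d + 2) :: nat)"
    by (simp add: fact_Suc numeral_2_eq_2 algebra_simps)
  with sum have "(\<Sum>u\<le>m. (m choose u) * fact (Suc u) * fact (m + d - u)) * ((d + 1) * (d + 2))
      = fact (d + 2) * fact m * ((m + d + 2) choose (d + 2))"
    by (metis mult.assoc mult.commute)
  also have "\<dots> = fact (m + d + 2)"
    using binomial_fact_lemma[of "d + 2" "m + d + 2"] by simp
  finally show ?thesis .
qed

definition at_least_two_of :: "'a set \<Rightarrow> 'a set \<Rightarrow> real" where
  "at_least_two_of S T = (if 2 \<le> card (T \<inter> S) then 1 else 0)"

lemma shapley_cong:
  assumes "i \<in> N" and "\<And>T. T \<subseteq> N \<Longrightarrow> v T = v' T"
  shows "shapley N v i = shapley N v' i"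
  unfolding shapley_def
proof (intro sum.cong refl arg_cong2[where f = "(*)"] arg_cong2[where f = "(-)"])
  fix T
  assume "T \<in> Pow (N - {i})"
  then show "v (insert i T) = v' (insert i T)" "v T = v' T"
    using assms(1) by (auto intro!: assms(2))
qed

lemma shapley_sum:
  "shapley N (\<lambda>T. \<Sum>j\<in>J. c j * v j T) i = (\<Sum>j\<in>J. c j * shapley N (v j) i)"
  unfolding shapley_def
  by (simp add: sum_subtractf[symmetric] sum_distrib_left sum_distrib_right algebra_simps
      sum.swap[of _ J])

lemma shapley_null_player:
  assumes "\<And>T. v (insert i T) = v T"
  shows "shapley N v i = 0"
  unfolding shapley_def by (simp add: assms)

lemma sum_Pow_card:
  fixes f :: "nat \<Rightarrow> real"
  assumes "finite A"
  shows "(\<Sum>U\<in>Pow A. f (card U)) = (\<Sum>u\<le>card A. real (card A choose u) * f u)"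
proof -
  have "(\<Sum>U\<in>Pow A. f (card U)) = (\<Sum>u\<le>card A. \<Sum>U\<in>{U. U \<in> Pow A \<and> card U = u}. f (card U))"
    by (rule sum.group[symmetric]) (use assms in \<open>auto intro: card_mono\<close>)
  also have "\<dots> = (\<Sum>u\<le>card A. \<Sum>U\<in>{U. U \<subseteq> A \<and> card U = u}. f u)"
    by (rule sum.cong) auto
  finally show ?thesis
    using n_subsets[OF assms] by simp
qed

lemma sum_subsets_meeting_once:
  fixes f :: "nat \<Rightarrow> real"
  assumes "finite N" and "S \<subseteq> N" and "i \<in> S"
  shows "(\<Sum>T\<in>{T \<in> Pow (N - {i}). card (T \<inter> S) = 1}. f (card T))
    = real (card S - 1) * (\<Sum>U\<in>Pow (N - S). f (Suc (card U)))"
proof -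
  have "(\<Sum>T\<in>{T \<in> Pow (N - {i}). card (T \<inter> S) = 1}. f (card T))
      = (\<Sum>p\<in>(S - {i}) \<times> Pow (N - S). f (card (insert (fst p) (snd p))))"
  proof (rule sum.reindex_bij_witness[where i = "\<lambda>p. insert (fst p) (snd p)"
        and j = "\<lambda>T. (the_elem (T \<inter> S), T - S)"])
    fix p
    assume p: "p \<in> (S - {i}) \<times> Pow (N - S)"
    then have meet: "insert (fst p) (snd p) \<inter> S = {fst p}"
      by auto
    show "(the_elem (insert (fst p) (snd p) \<inter> S), insert (fst p) (snd p) - S) = p"
      using p meet by auto
    show "insert (fst p) (snd p) \<in> {T \<in> Pow (N - {i}). card (T \<inter> S) = 1}"
      using p meet assms(2,3) by auto
  next
    fix T
    assume T: "T \<in> {T \<in> Pow (N - {i}). card (T \<inter> S) = 1}"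
    then obtain s where s: "T \<inter> S = {s}"
      by (auto simp: card_1_singleton_iff)
    then have "insert (the_elem (T \<inter> S)) (T - S) = T"
      by auto
    then show "insert (fst (the_elem (T \<inter> S), T - S)) (snd (the_elem (T \<inter> S), T - S)) = T"
      and "f (card (insert (fst (the_elem (T \<inter> S), T - S)) (snd (the_elem (T \<inter> S), T - S))))
        = f (card T)"
      by simp_all
    show "(the_elem (T \<inter> S), T - S) \<in> (S - {i}) \<times> Pow (N - S)"
      using s T by auto
  qed
  also have "\<dots> = (\<Sum>s\<in>S - {i}. \<Sum>U\<in>Pow (N - S). f (card (insert s U)))"
    by (rule sum.cartesian_product[symmetric, unfolded split_def])
  also have "\<dots> = (\<Sum>s\<in>S - {i}. \<Sum>U\<in>Pow (N - S). f (Suc (card U)))"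
  proof (intro sum.cong refl)
    fix s U
    assume "s \<in> S - {i}" "U \<in> Pow (N - S)"
    moreover have "finite U"
      using calculation(2) assms(1) finite_subset by auto
    moreover have "s \<notin> U"
      using calculation by auto
    ultimately show "f (card (insert s U)) = f (Suc (card U))"
      by simp
  qed
  finally show ?thesis
    using assms finite_subset by simp
qed

lemma shapley_at_least_two_of:
  assumes "finite N" and "S \<subseteq> N" and "i \<in> S" and "2 \<le> card S"
  shows "shapley N (at_least_two_of S) i = 1 / real (card S)"
proof -
  obtain d where d: "card S = d + 2"
    using assms(4) le_Suc_ex by (metis add.commute)
  define m where "m = card (N - S)"
  have finS: "finite S"
    using assms(1,2) finite_subset by blast
  have n: "card N = m + d + 2"
    unfolding m_def using card_Diff_subset[OF finS assms(2)] card_mono[OF assms(1,2)] d by simp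
  define w :: "nat \<Rightarrow> real" where "w t = fact t * fact (card N - t - 1) / fact (card N)" for t
  txt \<open>\<open>i\<close> is pivotal exactly for the coalitions meeting \<open>S\<close> in one other member.\<close>
  have "shapley N (at_least_two_of S) i
      = (\<Sum>T\<in>Pow (N - {i}). if card (T \<inter> S) = 1 then w (card T) else 0)"
    unfolding shapley_def
  proof (rule sum.cong[OF refl])
    fix T
    assume "T \<in> Pow (N - {i})"
    then have "card (insert i T \<inter> S) = Suc (card (T \<inter> S))"
      using assms(3) finS by (subst card_insert_disjoint[symmetric]) auto
    then show "fact (card T) * fact (card N - card T - 1) / fact (card N)
        * (at_least_two_of S (insert i T) - at_least_two_of S T)
        = (if card (T \<inter> S) = 1 then w (card T) else 0)"
      unfolding w_def at_least_two_of_def by auto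
  qed
  also have "\<dots> = (\<Sum>T\<in>{T \<in> Pow (N - {i}). card (T \<inter> S) = 1}. w (card T))"
    by (rule sum.inter_filter[symmetric]) (use assms(1) in simp)
  also have "\<dots> = real (d + 1) * (\<Sum>u\<le>m. real (m choose u) * w (Suc u))"
    using sum_subsets_meeting_once[OF assms(1-3)] sum_Pow_card[of "N - S"] assms(1) d
    by (simp add: m_def)
  also have "(\<Sum>u\<le>m. real (m choose u) * w (Suc u))
      = real (\<Sum>u\<le>m. (m choose u) * fact (Suc u) * fact (m + d - u)) / fact (m + d + 2)"
    unfolding w_def n of_nat_sum sum_divide_distrib
    by (intro sum.cong refl) (simp add: algebra_simps)
  also have "real (\<Sum>u\<le>m. (m choose u) * fact (Suc u) * fact (m + d - u))
      = fact (m + d + 2) / (real (d + 1) * real (d + 2))"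
  proof (rule eq_divide_imp)
    show "real (\<Sum>u\<le>m. (m choose u) * fact (Suc u) * fact (m + d - u)) * (real (d + 1) * real (d + 2))
        = fact (m + d + 2)"
      by (metis sum_choose_fact_eq of_nat_fact of_nat_mult)
  qed simp
  finally show ?thesis
    by (simp add: d)
qed

lemma second_price_image_antimono:
  fixes P :: "nat set" and \<sigma> :: "nat \<Rightarrow> 'a" and b :: "'a \<Rightarrow> real"
  assumes "finite P" and "inj_on \<sigma> P" and "2 \<le> card P"
    and antimono: "\<And>x y. x \<in> P \<Longrightarrow> y \<in> P \<Longrightarrow> x < y \<Longrightarrow> b (\<sigma> y) \<le> b (\<sigma> x)"
  shows "second_price b (\<sigma> ` P) = b (\<sigma> (sorted_list_of_set P ! 1))"
proof -
  define ps where "ps = sorted_list_of_set P"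
  have ps: "set ps = P" "distinct ps" "length ps = card P" "sorted_wrt (<) ps"
    unfolding ps_def using assms(1) by auto
  define ys where "ys = map (b \<circ> \<sigma>) ps"
  have "sorted_wrt (\<lambda>x y. b (\<sigma> y) \<le> b (\<sigma> x)) ps"
    by (rule sorted_wrt_mono_rel[OF _ ps(4)]) (use antimono ps(1) in auto)
  then have sorted: "sorted (rev ys)"
    unfolding ys_def by (simp add: sorted_wrt_rev sorted_wrt_map)
  have "image_mset b (mset_set (\<sigma> ` P)) = image_mset (b \<circ> \<sigma>) (mset_set P)"
    by (simp add: image_mset_mset_set[OF assms(2), symmetric] multiset.map_comp)
  also have "\<dots> = mset (rev ys)"
    unfolding ys_def using mset_set_set[OF ps(2)] ps(1) by simp
  finally have "second_price b (\<sigma> ` P) = rev (sorted_list_of_multiset (mset (rev ys))) ! 1"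
    unfolding second_price_def using card_image[OF assms(2)] assms(3) by simp
  also have "\<dots> = ys ! 1"
    unfolding sorted_list_of_multiset_mset sorted_sort_id[OF sorted] by simp
  also have "\<dots> = b (\<sigma> (ps ! 1))"
    unfolding ys_def using ps(3) assms(3) by simp
  finally show ?thesis
    unfolding ps_def .
qed

lemma two_le_card_Int_atMost_iff:
  fixes P :: "nat set"
  assumes "finite P" and "2 \<le> card P"
  shows "2 \<le> card (P \<inter> {..j}) \<longleftrightarrow> sorted_list_of_set P ! 1 \<le> j"
proof -
  define ps where "ps = sorted_list_of_set P"
  have ps: "set ps = P" "length ps = card P" "sorted_wrt (<) ps"
    unfolding ps_def using assms(1) by auto
  have less: "ps ! 0 < ps ! 1"
    using sorted_wrt_nth_less[OF ps(3), of 0 1] ps(2) assms(2) by simp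
  have mem: "ps ! 0 \<in> P" "ps ! 1 \<in> P"
    using ps(1,2) assms(2) nth_mem[of _ ps] by auto
  show ?thesis
    unfolding ps_def[symmetric]
  proof
    assume "ps ! 1 \<le> j"
    then have "{ps ! 0, ps ! 1} \<subseteq> P \<inter> {..j}"
      using mem less by auto
    then have "card {ps ! 0, ps ! 1} \<le> card (P \<inter> {..j})"
      by (rule card_mono[rotated]) (use assms(1) in simp)
    then show "2 \<le> card (P \<inter> {..j})"
      using less by simp
  next
    assume two: "2 \<le> card (P \<inter> {..j})"
    show "ps ! 1 \<le> j"
    proof (rule ccontr)
      assume "\<not> ps ! 1 \<le> j"
      have "P \<inter> {..j} \<subseteq> {ps ! 0}"
      proof
        fix x
        assume x: "x \<in> P \<inter> {..j}"
        then obtain i where i: "i < length ps" "x = ps ! i"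
          using ps(1) by (auto simp: in_set_conv_nth)
        have "i = 0"
        proof (rule ccontr)
          assume "i \<noteq> 0"
          then have "ps ! 1 \<le> ps ! i"
            using sorted_wrt_nth_less[OF ps(3), of 1 i] i by (cases "i = 1") auto
          then show False
            using x i \<open>\<not> ps ! 1 \<le> j\<close> by auto
        qed
        then show "x \<in> {ps ! 0}"
          using i by simp
      qed
      then have "card (P \<inter> {..j}) \<le> 1"
        using card_mono[of "{ps ! 0}"] by simp
      then show False
        using two by simp
    qed
  qed
qed

lemma second_price_layer_decomposition:
  fixes \<sigma> :: "nat \<Rightarrow> 'a" and b :: "'a \<Rightarrow> real" and \<beta> :: "nat \<Rightarrow> real"
  assumes inj: "inj_on \<sigma> {1..n}"
    and antimono: "\<And>k l. k \<in> {1..n} \<Longrightarrow> l \<in> {1..n} \<Longrightarrow> k \<le> l \<Longrightarrow> b (\<sigma> l) \<le> b (\<sigma> k)"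
    and \<beta>: "\<And>j. j \<in> {1..n} \<Longrightarrow> \<beta> j = b (\<sigma> j)" "\<beta> (Suc n) = 0"
    and T: "T \<subseteq> \<sigma> ` {1..n}"
  shows "second_price b T = (\<Sum>j=1..n. (\<beta> j - \<beta> (Suc j)) * at_least_two_of (\<sigma> ` {1..j}) T)"
proof -
  from T obtain P where P: "P \<subseteq> {1..n}" and T_eq: "T = \<sigma> ` P"
    unfolding subset_image_iff by blast
  have finP: "finite P"
    using P finite_subset by blast
  have layer: "at_least_two_of (\<sigma> ` {1..j}) (\<sigma> ` P) = (if 2 \<le> card (P \<inter> {..j}) then 1 else 0)"
    if "j \<in> {1..n}" for j
  proof -
    have "P \<inter> {..j} = P \<inter> {1..j}"
      using P by auto
    then have "\<sigma> ` P \<inter> \<sigma> ` {1..j} = \<sigma> ` (P \<inter> {..j})"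
      using inj_on_image_Int[OF inj P, of "{1..j}"] that by simp
    moreover have "card (\<sigma> ` (P \<inter> {..j})) = card (P \<inter> {..j})"
      using P by (intro card_image inj_on_subset[OF inj]) auto
    ultimately show ?thesis
      unfolding at_least_two_of_def by simp
  qed
  have "second_price b (\<sigma> ` P)
      = (\<Sum>j=1..n. (\<beta> j - \<beta> (Suc j)) * at_least_two_of (\<sigma> ` {1..j}) (\<sigma> ` P))"
  proof (cases "2 \<le> card P")
    case False
    have "card (P \<inter> {..j}) \<le> card P" for j
      using finP by (simp add: card_mono)
    then have "at_least_two_of (\<sigma> ` {1..j}) (\<sigma> ` P) = 0" if "j \<in> {1..n}" for j
      using False layer[OF that] by (metis le_trans)
    then show ?thesis
      using False card_image[OF inj_on_subset[OF inj P]] by (simp add: second_price_def)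
  next
    case True
    define q where "q = sorted_list_of_set P ! 1"
    have "q \<in> P"
      unfolding q_def using True finP nth_mem[of 1 "sorted_list_of_set P"] by simp
    then have q: "q \<in> {1..n}"
      using P by auto
    have "(\<Sum>j=1..n. (\<beta> j - \<beta> (Suc j)) * at_least_two_of (\<sigma> ` {1..j}) (\<sigma> ` P))
        = (\<Sum>j=1..n. if q \<le> j then \<beta> j - \<beta> (Suc j) else 0)"
    proof (intro sum.cong refl)
      fix j
      assume "j \<in> {1..n}"
      then show "(\<beta> j - \<beta> (Suc j)) * at_least_two_of (\<sigma> ` {1..j}) (\<sigma> ` P)
          = (if q \<le> j then \<beta> j - \<beta> (Suc j) else 0)"
        unfolding layer[OF \<open>j \<in> {1..n}\<close>] two_le_card_Int_atMost_iff[OF finP True] q_def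
        by simp
    qed
    also have "\<dots> = (\<Sum>j\<in>{j \<in> {1..n}. q \<le> j}. \<beta> j - \<beta> (Suc j))"
      by (rule sum.inter_filter[symmetric]) simp
    also have "\<dots> = (\<Sum>j=q..n. \<beta> j - \<beta> (Suc j))"
      by (rule sum.cong) (use q in auto)
    also have "\<dots> = \<beta> q"
      using sum_Suc_diff[of q n "\<lambda>j. - \<beta> j"] q \<beta>(2) by simp
    also have "\<dots> = second_price b (\<sigma> ` P)"
      unfolding q_def \<beta>(1)[OF q[unfolded q_def]]
      by (rule second_price_image_antimono[OF finP inj_on_subset[OF inj P] True, symmetric])
        (use P in \<open>auto intro!: antimono\<close>)
    finally show ?thesis ..
  qed
  then show ?thesis
    unfolding T_eq .
qed

lemma sum_attrA_prefix:
  assumes "1 \<le> k"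
  shows "(\<Sum>l=1..j. attrA k l) = (if 2 \<le> j \<and> k \<le> j then 1 / real j else 0)"
proof (induction j)
  case 0
  then show ?case by simp
next
  case (Suc j)
  show ?case
  proof (cases "j = 0")
    case True
    then show ?thesis by (simp add: attrA_def)
  next
    case False
    then show ?thesis
      using Suc.IH assms
      by (auto simp: attrA_def field_split_simps of_nat_diff add_nonneg_eq_0_iff)
  qed
qed

lemma sum_by_parts_prefix:
  fixes a \<beta> :: "nat \<Rightarrow> 'a::comm_ring"
  shows "(\<Sum>j=1..n. a j * \<beta> j)
    = (\<Sum>j=1..n. (\<beta> j - \<beta> (Suc j)) * (\<Sum>l=1..j. a l)) + \<beta> (Suc n) * (\<Sum>l=1..n. a l)"
  by (induction n) (simp_all add: algebra_simps)

lemma shapley_top_layer: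
  assumes "finite N" and bij: "bij_betw \<sigma> {1..n} N" and k: "k \<in> {1..n}" and j: "j \<in> {1..n}"
  shows "shapley N (at_least_two_of (\<sigma> ` {1..j})) (\<sigma> k) = (\<Sum>l=1..j. attrA k l)"
proof -
  have inj: "inj_on \<sigma> {1..n}" and img: "\<sigma> ` {1..n} = N"
    using bij by (simp_all add: bij_betw_def)
  have sub: "{1..j} \<subseteq> {1..n}"
    using j by simp
  show ?thesis
  proof (cases "2 \<le> j \<and> k \<le> j")
    case True
    have "card (\<sigma> ` {1..j}) = j"
      using card_image[OF inj_on_subset[OF inj sub]] by simp
    moreover have "\<sigma> ` {1..j} \<subseteq> N"
      using image_mono[OF sub, of \<sigma>] img by simp
    moreover have "\<sigma> k \<in> \<sigma> ` {1..j}"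
      using True k by simp
    ultimately have "shapley N (at_least_two_of (\<sigma> ` {1..j})) (\<sigma> k) = 1 / real j"
      using True shapley_at_least_two_of[OF assms(1)] by metis
    then show ?thesis
      using True k sum_attrA_prefix[of k j] by simp
  next
    case False
    have "at_least_two_of (\<sigma> ` {1..j}) (insert (\<sigma> k) T) = at_least_two_of (\<sigma> ` {1..j}) T" for T
    proof (cases "j < 2")
      case True
      then have "j = 1"
        using j by simp
      then have "\<sigma> ` {1..j} = {\<sigma> 1}"
        by simp
      then show ?thesis
        unfolding at_least_two_of_def by (simp add: Int_insert_right)
    next
      case False
      have "\<sigma> k \<notin> \<sigma> ` {1..j}"
      proof
        assume "\<sigma> k \<in> \<sigma> ` {1..j}"
        then obtain l where l: "l \<in> {1..j}" "\<sigma> k = \<sigma> l"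
          by blast
        then have "k = l"
          using inj_onD[OF inj l(2)] k sub by blast
        then show False
          using l(1) False \<open>\<not> (2 \<le> j \<and> k \<le> j)\<close> by simp
      qed
      then show ?thesis
        unfolding at_least_two_of_def by simp
    qed
    then show ?thesis
      using False k sum_attrA_prefix[of k j] by (simp add: shapley_null_player)
  qed
qed

theorem mainTheorem4:
  fixes N :: "'a set" and b :: "'a \<Rightarrow> real" and \<sigma> :: "nat \<Rightarrow> 'a"
  assumes "finite N"
    and "\<And>i. i \<in> N \<Longrightarrow> b i \<ge> 0"
    and "bij_betw \<sigma> {1..card N} N"
    and "\<And>k l. k \<in> {1..card N} \<Longrightarrow> l \<in> {1..card N} \<Longrightarrow> k \<le> l \<Longrightarrow> b (\<sigma> l) \<le> b (\<sigma> k)"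
    and "k \<in> {1..card N}"
  shows "(\<Sum>j=1..card N. attrA k j * b (\<sigma> j)) = shapley N (second_price b) (\<sigma> k)"
proof -
  define n where "n = card N"
  define \<beta> where "\<beta> j = (if j \<le> n then b (\<sigma> j) else 0)" for j
  note bij = assms(3)[folded n_def] and antimono = assms(4)[folded n_def] and k = assms(5)[folded n_def]
  have inj: "inj_on \<sigma> {1..n}" and img: "\<sigma> ` {1..n} = N"
    using bij by (simp_all add: bij_betw_def)
  have \<beta>: "\<And>j. j \<in> {1..n} \<Longrightarrow> \<beta> j = b (\<sigma> j)" "\<beta> (Suc n) = 0"
    by (simp_all add: \<beta>_def)
  have "shapley N (second_price b) (\<sigma> k)
      = shapley N (\<lambda>T. \<Sum>j=1..n. (\<beta> j - \<beta> (Suc j)) * at_least_two_of (\<sigma> ` {1..j}) T) (\<sigma> k)"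
    using img k
    by (intro shapley_cong second_price_layer_decomposition[where b = b and \<beta> = \<beta>, OF inj antimono \<beta>])
      auto
  also have "\<dots> = (\<Sum>j=1..n. (\<beta> j - \<beta> (Suc j)) * shapley N (at_least_two_of (\<sigma> ` {1..j})) (\<sigma> k))"
    by (rule shapley_sum)
  also have "\<dots> = (\<Sum>j=1..n. (\<beta> j - \<beta> (Suc j)) * (\<Sum>l=1..j. attrA k l))"
    using shapley_top_layer[OF assms(1) bij k] by simp
  also have "\<dots> = (\<Sum>j=1..n. attrA k j * \<beta> j)"
    using sum_by_parts_prefix[of "attrA k" \<beta> n] \<beta>(2) by simp
  also have "\<dots> = (\<Sum>j=1..n. attrA k j * b (\<sigma> j))"
    using \<beta>(1) by simp
  finally show ?thesis
    unfolding n_def ..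
qed

end
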